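(* Let $U\subset\mathbb C$ be a convex domain bounded by a smooth Jordan curve, and let $f$ be holomorphic in a neighborhood of $\overline U$ with $\operatorname{Re}(f')>0$ in $U$ and $f(z)\ne z$ for all $z\in\partial U$. Let $\omega_f$ be the Buff form of $f$. For $z\in U\cap f^{-1}(U)$ with $f(z)\ne z$ and $0\le t\le1$ let $z_t=(1-t)z+tf(z)$ and $$u_{f,t}(z)=-t+\int_{[z,z_t]}\omega_f(s)\,ds.$$ Suppose $p\in U$ is a fixed point of $f$ with $f'(p)=1$ and fixed point multiplicity $q+1\ge2$. Then for every $0<\epsilon<1$ there is $r>0$ such that $|u_{f,t}(z)|<\epsilon t$ for all $z\in\mathbb D(p,r)$ with $f(z)\ne z$ and all $0<t\le1$. Consequently, if $z\in\mathbb D(p,r)$ is not fixed by $f$, the curve $t\mapsto z_t$ parametrizing $[z,f(z)]$ lifts under the rectifying coordinate $\phi_f$ to a curve $t\mapsto Z_t$ satisfying $|Z_t-(Z_0+t)|<\epsilon t$ for $0<t\le 1$.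
   Context: $\operatorname{Log}$ is the principal branch of the logarithm. The Buff form of $f$ is $\omega_f=\frac{f'(z)-1}{(f(z)-z)\operatorname{Log} f'(z)}\,dz$ (the factor $(f'-1)/\operatorname{Log}f'$ being $1$ where $f'=1$), meromorphic with poles at fixed points of $f$. The rectifying coordinate $\phi_f$ is the multi-valued primitive of $\omega_f$; a lift of a curve avoiding fixed points is obtained by analytic continuation of a branch of $\phi_f$ along it, so $Z_t=Z_0+\int_{[z,z_t]}\omega_f$. The segment $[z,f(z)]$ contains no fixed point of $f$ when $z\in U\cap f^{-1}(U)$ is not fixed. *)

theory Defs
  imports "HOL-Complex_Analysis.Complex_Analysis"
begin

definition vderiv :: "(real \<Rightarrow> complex) \<Rightarrow> real \<Rightarrow> complex" where
  "vderiv g = (\<lambda>t. vector_derivative g (at t))"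

definition smooth_jordan_boundary :: "complex set \<Rightarrow> bool" where
  "smooth_jordan_boundary U \<longleftrightarrow>
     (\<exists>g :: real \<Rightarrow> complex.
        (\<forall>n t. (vderiv ^^ n) g differentiable (at t)) \<and>
        (\<forall>t. vderiv g t \<noteq> 0) \<and>
        (\<forall>t. g (t + 1) = g t) \<and>
        inj_on g {0..<1} \<and>
        g ` {0..1} = frontier U)"

definition buff_factor :: "complex \<Rightarrow> complex" where
  "buff_factor w = (if w = 1 then 1 else (w - 1) / Ln w)"

text \<open>Coefficient of the Buff form omega_f = buff_form f z dz.\<close>
definition buff_form :: "(complex \<Rightarrow> complex) \<Rightarrow> complex \<Rightarrow> complex" where
  "buff_form f z = buff_factor (deriv f z) / (f z - z)"

definition seg_pt :: "(complex \<Rightarrow> complex) \<Rightarrow> complex \<Rightarrow> real \<Rightarrow> complex" where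
  "seg_pt f z t = (1 - of_real t) * z + of_real t * f z"

definition u_ft :: "(complex \<Rightarrow> complex) \<Rightarrow> real \<Rightarrow> complex \<Rightarrow> complex" where
  "u_ft f t z = - of_real t + contour_integral (linepath z (seg_pt f z t)) (buff_form f)"

text \<open>Z is a lift of the curve gamma on [0,1] under the (multivalued) primitive of
 the form omega = w(z) dz: Z is continuous and near each parameter it agrees with
 a local holomorphic branch of a primitive of w composed with gamma
 (i.e. Z is obtained by analytic continuation of a branch along gamma).\<close>
definition is_lift :: "(complex \<Rightarrow> complex) \<Rightarrow> (real \<Rightarrow> complex) \<Rightarrow> (real \<Rightarrow> complex) \<Rightarrow> bool" where
  "is_lift w \<gamma> Z \<longleftrightarrow> continuous_on {0..1} Z \<and>
     (\<forall>t\<in>{0..1}. \<exists>V \<Phi>. open V \<and> \<gamma> t \<in> V \<and>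
        (\<forall>y\<in>V. (\<Phi> has_field_derivative w y) (at y)) \<and>
        (\<exists>e>0. \<forall>s\<in>{0..1}. \<bar>s - t\<bar> < e \<longrightarrow> \<gamma> s \<in> V \<and> Z s = \<Phi> (\<gamma> s)))"

end

theory Submission
  imports Defs
begin

(* Near the parabolic fixed point p we have f' close to 1, hence (f' - 1) / Log f' close to 1,
   and the displacement g x = f x - x is Lipschitz with a small constant. On the segment
   [z, f z], whose length is |g z|, the displacement therefore stays close to g z, so the Buff
   form is uniformly close to dz / g z there; integrating over [z, z_t], of length t |g z|,
   gives t up to an error that is small compared with t. The same estimate shows that g has no
   zero on a convex neighbourhood of the segment, where the Buff form thus has a holomorphic
   primitive; every lift of t |-> z_t differs from this primitive by a constant, so
   Z_t - Z_0 - t = u_{f,t}(z). *)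

lemma tendsto_buff_factor_1: "(buff_factor \<longlongrightarrow> 1) (at 1)"
proof -
  have "(Ln has_field_derivative 1) (at 1)"
    using has_field_derivative_Ln[of 1] by simp
  then have "((\<lambda>w. Ln w / (w - 1)) \<longlongrightarrow> 1) (at 1)"
    by (simp add: has_field_derivative_iff)
  then have "((\<lambda>w. inverse (Ln w / (w - 1))) \<longlongrightarrow> inverse 1) (at 1)"
    by (intro tendsto_inverse) auto
  then have "((\<lambda>w. inverse (Ln w / (w - 1))) \<longlongrightarrow> 1) (at 1)"
    by simp
  moreover have "\<forall>\<^sub>F w in at 1. inverse (Ln w / (w - 1)) = buff_factor w"
    by (auto simp: eventually_at_filter buff_factor_def)
  ultimately show ?thesis
    by (rule Lim_transform_eventually)
qed

lemma buff_factor_holomorphic: "buff_factor holomorphic_on - \<real>\<^sub>\<le>\<^sub>0"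
proof (rule no_isolated_singularity'[where K = "{1}"])
  show "(buff_factor \<longlongrightarrow> buff_factor w) (at w within - \<real>\<^sub>\<le>\<^sub>0)" if "w \<in> {1}" for w
    using that tendsto_within_subset[OF tendsto_buff_factor_1] by (simp add: buff_factor_def)
  have "Ln w \<noteq> 0" if "w \<noteq> 1" "w \<notin> \<real>\<^sub>\<le>\<^sub>0" for w
  proof
    assume "Ln w = 0"
    have "w \<noteq> 0"
      using that(2) by auto
    then have "w = exp (Ln w)"
      by simp
    with \<open>Ln w = 0\<close> that(1) show False
      by simp
  qed
  then have "(\<lambda>w. (w - 1) / Ln w) holomorphic_on - \<real>\<^sub>\<le>\<^sub>0 - {1}"
    by (intro holomorphic_intros) auto
  then show "buff_factor holomorphic_on - \<real>\<^sub>\<le>\<^sub>0 - {1}"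
    by (rule holomorphic_transform) (auto simp: buff_factor_def)
qed (auto simp: open_Compl)

lemma not_nonpos_Reals_if_norm_sub_1_less:
  fixes w :: complex
  assumes "norm (w - 1) < 1"
  shows "w \<notin> \<real>\<^sub>\<le>\<^sub>0"
proof
  assume "w \<in> \<real>\<^sub>\<le>\<^sub>0"
  then have "1 \<le> \<bar>Re (w - 1)\<bar>"
    by (simp add: complex_nonpos_Reals_iff)
  then show False
    using assms abs_Re_le_cmod[of "w - 1"] by linarith
qed


lemma buff_form_holomorphic:
  assumes "open S" "f holomorphic_on S"
    and "\<forall>x\<in>S. deriv f x \<notin> \<real>\<^sub>\<le>\<^sub>0" and "\<forall>x\<in>S. f x \<noteq> x"
  shows "buff_form f holomorphic_on S"
proof -
  have "deriv f holomorphic_on S"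
    using assms(2,1) by (rule holomorphic_deriv)
  then have "(buff_factor \<circ> deriv f) holomorphic_on S"
    using assms(3) by (intro holomorphic_on_compose_gen[OF _ buff_factor_holomorphic]) auto
  then have "(\<lambda>x. buff_factor (deriv f x) / (f x - x)) holomorphic_on S"
    using assms(2,4) by (intro holomorphic_intros) (auto simp: o_def)
  then show ?thesis
    by (simp add: buff_form_def[abs_def])
qed

lemma norm_displacement_diff_le:
  assumes "open S" "convex S" "f holomorphic_on S"
    and "\<forall>x\<in>S. norm (deriv f x - 1) \<le> \<eta>" and "x \<in> S" "y \<in> S"
  shows "norm ((f x - x) - (f y - y)) \<le> \<eta> * norm (x - y)"
proof (rule field_differentiable_bound[OF assms(2), where f' = "\<lambda>x. deriv f x - 1"])
  fix w assume "w \<in> S"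
  then have "(f has_field_derivative deriv f w) (at w)"
    using assms(1,3) holomorphic_derivI by blast
  from DERIV_diff[OF this DERIV_ident]
  show "((\<lambda>x. f x - x) has_field_derivative deriv f w - 1) (at w within S)"
    by (rule has_field_derivative_at_within)
qed (use assms in auto)

lemma seg_pt_eq_linepath: "seg_pt f z = linepath z (f z)"
  by (auto simp: seg_pt_def linepath_def scaleR_conv_of_real fun_eq_iff)

lemma seg_pt_minus_start: "seg_pt f z t - z = of_real t * (f z - z)"
  by (simp add: seg_pt_def algebra_simps)

lemma seg_pt_in_closed_segment: "t \<in> {0..1} \<Longrightarrow> seg_pt f z t \<in> closed_segment z (f z)"
  using linepath_in_path by (simp add: seg_pt_eq_linepath)

lemma closed_segment_seg_pt_subset:
  "t \<in> {0..1} \<Longrightarrow> closed_segment z (seg_pt f z t) \<subseteq> closed_segment z (f z)"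
  by (intro closed_segment_subset ends_in_segment(1) seg_pt_in_closed_segment convex_closed_segment)

lemma has_contour_integral_primitive_seg_pt:
  assumes "\<forall>x\<in>V. (\<Phi> has_field_derivative w x) (at x)"
    and "closed_segment z (f z) \<subseteq> V" and "t \<in> {0..1}"
  shows "(w has_contour_integral (\<Phi> (seg_pt f z t) - \<Phi> z)) (linepath z (seg_pt f z t))"
proof -
  have "closed_segment z (seg_pt f z t) \<subseteq> V"
    using assms(2) closed_segment_seg_pt_subset[OF assms(3)] by blast
  moreover have "(\<Phi> has_field_derivative w x) (at x within V)" if "x \<in> V" for x
    using bspec[OF assms(1) that] by (rule has_field_derivative_at_within)
  ultimately show ?thesis
    using contour_integral_primitive[of V \<Phi> w "linepath z (seg_pt f z t)"] by simp
qed

lemma u_ft_eq_primitive: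
  assumes "\<forall>x\<in>V. (\<Phi> has_field_derivative buff_form f x) (at x)"
    and "closed_segment z (f z) \<subseteq> V" and "t \<in> {0..1}"
  shows "u_ft f t z = \<Phi> (seg_pt f z t) - \<Phi> z - of_real t"
  using contour_integral_unique[OF has_contour_integral_primitive_seg_pt[where f = f and z = z, OF assms]]
  by (simp add: u_ft_def)

lemma norm_u_ft_le:
  assumes "\<forall>x\<in>V. (\<Phi> has_field_derivative buff_form f x) (at x)"
    and "closed_segment z (f z) \<subseteq> V" and "f z \<noteq> z" and "t \<in> {0..1}"
    and "\<forall>x\<in>closed_segment z (f z). norm (buff_form f x - 1 / (f z - z)) \<le> B"
  shows "norm (u_ft f t z) \<le> B * norm (f z - z) * t"
proof -
  let ?zt = "seg_pt f z t"
  have "((\<lambda>x. buff_form f x - 1 / (f z - z)) has_contour_integral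
          (\<Phi> ?zt - \<Phi> z) - 1 / (f z - z) * (?zt - z)) (linepath z ?zt)"
    by (intro has_contour_integral_diff has_contour_integral_const_linepath
        has_contour_integral_primitive_seg_pt[where f = f and z = z, OF assms(1,2,4)])
  moreover have "1 / (f z - z) * (?zt - z) = of_real t"
    using assms(3) by (simp add: seg_pt_minus_start)
  ultimately have "((\<lambda>x. buff_form f x - 1 / (f z - z)) has_contour_integral u_ft f t z)
      (linepath z ?zt)"
    using u_ft_eq_primitive[OF assms(1,2,4)] by simp
  moreover have "0 \<le> B"
    using assms(5) ends_in_segment(1) norm_ge_zero order_trans by blast
  ultimately have "norm (u_ft f t z) \<le> B * norm (?zt - z)"
    using assms(5) closed_segment_seg_pt_subset[OF assms(4)]
    by (intro has_contour_integral_bound_linepath) auto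
  then show ?thesis
    using assms(4) by (simp add: seg_pt_minus_start norm_mult mult_ac)
qed

lemma is_lift_comp_primitive:
  assumes "open V" "continuous_on {0..1} \<gamma>" "\<gamma> ` {0..1} \<subseteq> V"
    and "\<forall>x\<in>V. (\<Phi> has_field_derivative w x) (at x)"
  shows "is_lift w \<gamma> (\<Phi> \<circ> \<gamma>)"
  unfolding is_lift_def
proof (intro conjI ballI)
  have "continuous_on V \<Phi>"
    using assms(4) DERIV_isCont continuous_at_imp_continuous_on by blast
  then show "continuous_on {0..1} (\<Phi> \<circ> \<gamma>)"
    using assms(2,3) continuous_on_compose continuous_on_subset by blast
  show "\<exists>V \<Phi>'. open V \<and> \<gamma> t \<in> V \<and> (\<forall>y\<in>V. (\<Phi>' has_field_derivative w y) (at y)) \<and>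
          (\<exists>e>0. \<forall>s\<in>{0..1}. \<bar>s - t\<bar> < e \<longrightarrow> \<gamma> s \<in> V \<and> (\<Phi> \<circ> \<gamma>) s = \<Phi>' (\<gamma> s))"
    if "t \<in> {0..1}" for t
    using assms that by (intro exI[of _ V] exI[of _ \<Phi>]) (auto intro!: exI[of _ 1])
qed

lemma is_lift_eq_primitive_plus_const:
  assumes lift: "is_lift w \<gamma> Z" and "\<gamma> ` {0..1} \<subseteq> V"
    and \<Phi>: "\<forall>x\<in>V. (\<Phi> has_field_derivative w x) (at x)"
    and \<gamma>': "\<And>s. s \<in> {0..1} \<Longrightarrow> (\<gamma> has_vector_derivative \<gamma>' s) (at s within {0..1})"
  obtains c where "\<And>s. s \<in> {0..1} \<Longrightarrow> Z s = \<Phi> (\<gamma> s) + c"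
proof -
  have D: "((\<lambda>s. Z s - \<Phi> (\<gamma> s)) has_derivative (\<lambda>h. 0)) (at s within {0..1})"
    if s: "s \<in> {0..1}" for s
  proof -
    from lift s obtain V' \<Psi> e where \<Psi>: "\<gamma> s \<in> V'" "\<forall>y\<in>V'. (\<Psi> has_field_derivative w y) (at y)"
      and "e > 0" and Z: "\<forall>s'\<in>{0..1}. \<bar>s' - s\<bar> < e \<longrightarrow> \<gamma> s' \<in> V' \<and> Z s' = \<Psi> (\<gamma> s')"
      unfolding is_lift_def by blast
    have "((\<Psi> \<circ> \<gamma>) has_vector_derivative \<gamma>' s * w (\<gamma> s)) (at s within {0..1})"
      by (rule field_vector_diff_chain_within[OF \<gamma>'[OF s]
            has_field_derivative_at_within[OF bspec[OF \<Psi>(2,1)]]])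
    moreover have "(\<Psi> \<circ> \<gamma>) s' = Z s'" if "s' \<in> {0..1}" "dist s' s < e" for s'
      using Z that by (simp add: dist_real_def)
    ultimately have Z': "(Z has_vector_derivative \<gamma>' s * w (\<gamma> s)) (at s within {0..1})"
      by (rule has_vector_derivative_transform_within[OF _ \<open>e > 0\<close> s])
    have "\<gamma> s \<in> V"
      using assms(2) s by blast
    then have "((\<Phi> \<circ> \<gamma>) has_vector_derivative \<gamma>' s * w (\<gamma> s)) (at s within {0..1})"
      by (rule field_vector_diff_chain_within[OF \<gamma>'[OF s]
            has_field_derivative_at_within[OF bspec[OF \<Phi>]]])
    with Z' have "((\<lambda>s. Z s - (\<Phi> \<circ> \<gamma>) s) has_vector_derivative
        \<gamma>' s * w (\<gamma> s) - \<gamma>' s * w (\<gamma> s)) (at s within {0..1})"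
      by (rule has_vector_derivative_diff)
    then show ?thesis
      by (simp add: has_vector_derivative_def o_def)
  qed
  obtain c where c: "\<And>s. s \<in> {0..1} \<Longrightarrow> Z s - \<Phi> (\<gamma> s) = c"
    using has_derivative_zero_constant[OF convex_real_interval(5) D] by blast
  show ?thesis
  proof (rule that)
    show "Z s = \<Phi> (\<gamma> s) + c" if "s \<in> {0..1}" for s
      using c[OF that] by (simp add: diff_eq_eq add.commute)
  qed
qed

lemma is_lift_increment_eq_u_ft:
  assumes lift: "is_lift (buff_form f) (seg_pt f z) Z"
    and \<Phi>: "\<forall>x\<in>V. (\<Phi> has_field_derivative buff_form f x) (at x)"
    and V: "closed_segment z (f z) \<subseteq> V" and t: "t \<in> {0..1}"
  shows "Z t - (Z 0 + of_real t) = u_ft f t z"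
proof -
  have image: "seg_pt f z ` {0..1} \<subseteq> V"
    using V seg_pt_in_closed_segment by blast
  have derivative: "(seg_pt f z has_vector_derivative f z - z) (at s within {0..1})" for s
    unfolding seg_pt_eq_linepath by (rule has_vector_derivative_linepath_within)
  obtain c where c: "\<And>s. s \<in> {0..1} \<Longrightarrow> Z s = \<Phi> (seg_pt f z s) + c"
    using is_lift_eq_primitive_plus_const[OF lift image \<Phi> derivative] by blast
  show ?thesis
    using c[OF t] c[of 0] u_ft_eq_primitive[OF \<Phi> V t] by (simp add: seg_pt_def)
qed

lemma buff_form_primitive_near_segment:
  assumes "open S" "convex S" "f holomorphic_on S"
    and "\<forall>x\<in>S. norm (deriv f x - 1) \<le> \<eta>" and "\<eta> \<le> 1/2"
    and "z \<in> S" "f z \<in> S" "f z \<noteq> z"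
  obtains V \<Phi> where "open V" "closed_segment z (f z) \<subseteq> V"
    and "\<forall>x\<in>V. (\<Phi> has_field_derivative buff_form f x) (at x)"
proof -
  define V where "V = S \<inter> ball z (2 * norm (f z - z))"
  have V: "open V" "convex V" "V \<subseteq> S"
    using assms(1,2) by (auto simp: V_def convex_Int)
  have "f x \<noteq> x" if "x \<in> V" for x
  proof
    assume "f x = x"
    then have "norm (f z - z) = norm ((f x - x) - (f z - z))"
      by (simp add: norm_minus_commute)
    also have "\<dots> \<le> \<eta> * norm (x - z)"
      using that V(3) by (intro norm_displacement_diff_le[OF assms(1-4)] assms(6)) auto
    also have "\<dots> \<le> norm (x - z) / 2"
      using mult_right_mono[OF assms(5) norm_ge_zero[of "x - z"]] by simp
    also have "\<dots> < norm (f z - z)"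
      using that by (simp add: V_def dist_norm norm_minus_commute)
    finally show False
      by simp
  qed
  moreover have "deriv f x \<notin> \<real>\<^sub>\<le>\<^sub>0" if "x \<in> V" for x
  proof (rule not_nonpos_Reals_if_norm_sub_1_less)
    have "norm (deriv f x - 1) \<le> \<eta>"
      using that V(3) assms(4) by blast
    then show "norm (deriv f x - 1) < 1"
      using assms(5) by linarith
  qed
  moreover have "f holomorphic_on V"
    using assms(3) V(3) by (rule holomorphic_on_subset)
  ultimately have "buff_form f holomorphic_on V"
    using buff_form_holomorphic[OF V(1)] by blast
  then obtain \<Phi> where \<Phi>: "\<And>x. x \<in> V \<Longrightarrow> (\<Phi> has_field_derivative buff_form f x) (at x within V)"
    using holomorphic_convex_primitive'[OF V(2,1)] by blast
  have "\<forall>x\<in>V. (\<Phi> has_field_derivative buff_form f x) (at x)"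
  proof
    fix x assume "x \<in> V"
    with \<Phi>[OF this] show "(\<Phi> has_field_derivative buff_form f x) (at x)"
      using at_within_open[OF _ V(1)] by simp
  qed
  moreover have "closed_segment z (f z) \<subseteq> V"
  proof
    fix x assume x: "x \<in> closed_segment z (f z)"
    have "x \<in> S"
      using x assms(2,6,7) closed_segment_subset by blast
    have "0 < norm (f z - z)"
      using assms(8) by simp
    then have "norm (x - z) < 2 * norm (f z - z)"
      using segment_bound1[OF x] by linarith
    with \<open>x \<in> S\<close> show "x \<in> V"
      by (simp add: V_def dist_norm norm_minus_commute)
  qed
  ultimately show ?thesis
    using that V(1) by blast
qed

lemma norm_divide_sub_inverse_le:
  fixes b g g0 :: complex
  assumes "g0 \<noteq> 0" "norm (b - 1) \<le> a" "norm (g - g0) \<le> \<eta> * norm g0" "\<eta> \<le> 1/2"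
  shows "norm (b / g - 1 / g0) \<le> 2 * (a + \<eta>) / norm g0"
proof -
  have "norm g0 \<le> norm g + norm (g - g0)"
    using norm_triangle_ineq4[of g "g - g0"] by simp
  moreover have "\<eta> * norm g0 \<le> norm g0 / 2"
    using mult_right_mono[OF assms(4) norm_ge_zero[of g0]] by simp
  ultimately have g: "norm g0 / 2 \<le> norm g"
    using assms(3) by linarith
  then have "g \<noteq> 0"
    using assms(1) by auto
  then have "b / g - 1 / g0 = ((b - 1) * g0 - (g - g0)) / (g * g0)"
    using assms(1) by (simp add: field_simps)
  then have "norm (b / g - 1 / g0) = norm ((b - 1) * g0 - (g - g0)) / (norm g * norm g0)"
    by (simp add: norm_divide norm_mult)
  also have "\<dots> \<le> (a + \<eta>) * norm g0 / (norm g0 / 2 * norm g0)"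
  proof (rule frac_le)
    show "norm ((b - 1) * g0 - (g - g0)) \<le> (a + \<eta>) * norm g0"
      using norm_triangle_ineq4[of "(b - 1) * g0" "g - g0"] assms(3)
        mult_right_mono[OF assms(2) norm_ge_zero[of g0]]
      by (simp add: norm_mult distrib_right)
    then show "0 \<le> (a + \<eta>) * norm g0"
      using norm_ge_zero order_trans by blast
    show "0 < norm g0 / 2 * norm g0"
      using assms(1) by simp
    show "norm g0 / 2 * norm g0 \<le> norm g * norm g0"
      using mult_right_mono[OF g norm_ge_zero[of g0]] by simp
  qed
  also have "\<dots> = 2 * (a + \<eta>) / norm g0"
    using assms(1) by (simp add: field_simps)
  finally show ?thesis .
qed

lemma norm_buff_form_sub_le:
  assumes "open S" "convex S" "f holomorphic_on S"
    and "\<forall>x\<in>S. norm (deriv f x - 1) \<le> \<eta>" and "\<eta> \<le> 1/2"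
    and "\<forall>x\<in>S. norm (buff_factor (deriv f x) - 1) \<le> a"
    and "z \<in> S" "f z \<in> S" "f z \<noteq> z" and x: "x \<in> closed_segment z (f z)"
  shows "norm (buff_form f x - 1 / (f z - z)) \<le> 2 * (a + \<eta>) / norm (f z - z)"
proof -
  have "x \<in> S"
    using assms(2,7,8) x closed_segment_subset by blast
  have "0 \<le> \<eta>"
    using bspec[OF assms(4,7)] norm_ge_zero order_trans by blast
  have "norm ((f x - x) - (f z - z)) \<le> \<eta> * norm (x - z)"
    by (rule norm_displacement_diff_le[OF assms(1-4) \<open>x \<in> S\<close> assms(7)])
  also have "\<dots> \<le> \<eta> * norm (f z - z)"
    using segment_bound1[OF x] \<open>0 \<le> \<eta>\<close> by (rule mult_left_mono)
  finally show ?thesis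
    using norm_divide_sub_inverse_le[OF _ bspec[OF assms(6) \<open>x \<in> S\<close>] _ assms(5)] assms(9)
    by (simp add: buff_form_def)
qed

lemma norm_u_ft_le_near_identity:
  assumes "open S" "convex S" "f holomorphic_on S"
    and "\<forall>x\<in>S. norm (deriv f x - 1) \<le> \<eta>" and "\<eta> \<le> 1/2"
    and "\<forall>x\<in>S. norm (buff_factor (deriv f x) - 1) \<le> a"
    and "z \<in> S" "f z \<in> S" "f z \<noteq> z" and "t \<in> {0..1}"
  shows "norm (u_ft f t z) \<le> 2 * (a + \<eta>) * t"
proof -
  obtain V \<Phi> where "closed_segment z (f z) \<subseteq> V"
    and "\<forall>x\<in>V. (\<Phi> has_field_derivative buff_form f x) (at x)"
    by (rule buff_form_primitive_near_segment[OF assms(1-5,7-9)])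
  moreover have "\<forall>x\<in>closed_segment z (f z).
      norm (buff_form f x - 1 / (f z - z)) \<le> 2 * (a + \<eta>) / norm (f z - z)"
    using norm_buff_form_sub_le[OF assms(1-9)] by blast
  ultimately have "norm (u_ft f t z) \<le> 2 * (a + \<eta>) / norm (f z - z) * norm (f z - z) * t"
    using norm_u_ft_le assms(9,10) by blast
  then show ?thesis
    using assms(9) by simp
qed

lemma is_lift_seg_pt_near_identity:
  assumes "open S" "convex S" "f holomorphic_on S"
    and "\<forall>x\<in>S. norm (deriv f x - 1) \<le> \<eta>" and "\<eta> \<le> 1/2"
    and "z \<in> S" "f z \<in> S" "f z \<noteq> z"
  shows "\<exists>Z. is_lift (buff_form f) (seg_pt f z) Z"
    and "is_lift (buff_form f) (seg_pt f z) Z \<Longrightarrow> t \<in> {0..1} \<Longrightarrow>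
      Z t - (Z 0 + of_real t) = u_ft f t z"
proof -
  obtain V \<Phi> where V: "open V" "closed_segment z (f z) \<subseteq> V"
    and \<Phi>: "\<forall>x\<in>V. (\<Phi> has_field_derivative buff_form f x) (at x)"
    by (rule buff_form_primitive_near_segment[OF assms])
  have "continuous_on {0..1} (seg_pt f z)"
    unfolding seg_pt_eq_linepath by (rule continuous_on_linepath)
  moreover have "seg_pt f z ` {0..1} \<subseteq> V"
    using V(2) seg_pt_in_closed_segment by blast
  ultimately show "\<exists>Z. is_lift (buff_form f) (seg_pt f z) Z"
    using is_lift_comp_primitive[OF V(1) _ _ \<Phi>] by blast
  show "Z t - (Z 0 + of_real t) = u_ft f t z"
    if "is_lift (buff_form f) (seg_pt f z) Z" and "t \<in> {0..1}"
    using is_lift_increment_eq_u_ft[OF that(1) \<Phi> V(2) that(2)] .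
qed

lemma parabolic_fixed_point_neighbourhood:
  assumes "open S" "f holomorphic_on S" "p \<in> S" "f p = p" "deriv f p = 1" "e > 0"
  obtains r \<delta> where "0 < r" "r \<le> \<delta>" "ball p \<delta> \<subseteq> S" "f ` ball p r \<subseteq> ball p \<delta>"
    and "\<forall>x\<in>ball p \<delta>. norm (deriv f x - 1) \<le> e"
    and "\<forall>x\<in>ball p \<delta>. norm (buff_factor (deriv f x) - 1) \<le> e"
proof -
  have "continuous_on S (deriv f)"
    using assms(1,2) by (intro holomorphic_on_imp_continuous_on holomorphic_deriv)
  then have "isCont (deriv f) p"
    using assms(1,3) continuous_on_eq_continuous_at by blast
  then have "(deriv f \<longlongrightarrow> 1) (nhds p)"
    using assms(5) unfolding isCont_def tendsto_at_iff_tendsto_nhds by simp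
  moreover have "isCont buff_factor 1"
    using tendsto_buff_factor_1 by (simp add: isCont_def buff_factor_def)
  ultimately have "((\<lambda>x. buff_factor (deriv f x)) \<longlongrightarrow> buff_factor 1) (nhds p)"
    unfolding isCont_def by (rule tendsto_compose[rotated])
  then have "((\<lambda>x. buff_factor (deriv f x)) \<longlongrightarrow> 1) (nhds p)"
    by (simp add: buff_factor_def)
  with \<open>(deriv f \<longlongrightarrow> 1) (nhds p)\<close>
  have "\<forall>\<^sub>F x in nhds p. x \<in> S \<and> dist (deriv f x) 1 < e \<and> dist (buff_factor (deriv f x)) 1 < e"
    using assms(1,3,6) by (intro eventually_conj eventually_nhds_in_open tendstoD)
  then obtain \<delta> where "\<delta> > 0" and \<delta>: "\<And>x. dist x p < \<delta> \<Longrightarrow>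
      x \<in> S \<and> dist (deriv f x) 1 < e \<and> dist (buff_factor (deriv f x)) 1 < e"
    unfolding eventually_nhds_metric by blast
  have "isCont f p"
    using assms(1-3) holomorphic_on_imp_continuous_on continuous_on_eq_continuous_at by blast
  then have "\<forall>\<^sub>F x in nhds p. f x \<in> ball p \<delta>"
    using \<open>\<delta> > 0\<close> assms(4) unfolding isCont_def tendsto_at_iff_tendsto_nhds
    by (intro topological_tendstoD) auto
  then obtain r where "r > 0" and r: "\<And>x. dist x p < r \<Longrightarrow> f x \<in> ball p \<delta>"
    unfolding eventually_nhds_metric by blast
  show ?thesis
  proof (rule that[of "min r \<delta>" \<delta>])
    show "ball p \<delta> \<subseteq> S" "f ` ball p (min r \<delta>) \<subseteq> ball p \<delta>"
      using \<delta> r by (auto simp: dist_commute)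
    have "norm (deriv f x - 1) < e \<and> norm (buff_factor (deriv f x) - 1) < e"
      if "x \<in> ball p \<delta>" for x
      using \<delta>[of x] that by (auto simp: dist_norm norm_minus_commute)
    then show "\<forall>x\<in>ball p \<delta>. norm (deriv f x - 1) \<le> e"
      "\<forall>x\<in>ball p \<delta>. norm (buff_factor (deriv f x) - 1) \<le> e"
      by (auto intro: less_imp_le)
  qed (use \<open>r > 0\<close> \<open>\<delta> > 0\<close> in auto)
qed

lemma lift_estimate_near_parabolic_fixed_point:
  assumes "open S" "f holomorphic_on S" "p \<in> S" "f p = p" "deriv f p = 1" "0 < \<epsilon>" "\<epsilon> < 1"
  shows "\<exists>r>0. ball p r \<subseteq> S \<inter> f -` S \<and>
           (\<forall>z\<in>ball p r. f z \<noteq> z \<longrightarrow>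
              (\<forall>t\<in>{0<..1}. cmod (u_ft f t z) < \<epsilon> * t) \<and>
              (\<exists>Z. is_lift (buff_form f) (seg_pt f z) Z) \<and>
              (\<forall>Z. is_lift (buff_form f) (seg_pt f z) Z \<longrightarrow>
                 (\<forall>t\<in>{0<..1}. cmod (Z t - (Z 0 + of_real t)) < \<epsilon> * t)))"
proof -
  have "0 < \<epsilon>/8"
    using assms(6) by simp
  then obtain r \<delta> where "0 < r" "r \<le> \<delta>" "ball p \<delta> \<subseteq> S" "f ` ball p r \<subseteq> ball p \<delta>"
    and deriv_near: "\<forall>x\<in>ball p \<delta>. norm (deriv f x - 1) \<le> \<epsilon>/8"
    and factor_near: "\<forall>x\<in>ball p \<delta>. norm (buff_factor (deriv f x) - 1) \<le> \<epsilon>/8"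
    by (rule parabolic_fixed_point_neighbourhood[OF assms(1-5)])
  have r: "ball p r \<subseteq> ball p \<delta>"
    using \<open>r \<le> \<delta>\<close> by (rule subset_ball)
  have hol: "f holomorphic_on ball p \<delta>"
    using assms(2) \<open>ball p \<delta> \<subseteq> S\<close> by (rule holomorphic_on_subset)
  have "\<epsilon>/8 \<le> 1/2"
    using assms(7) by simp
  note near_identity = open_ball convex_ball hol deriv_near this
  show ?thesis
  proof (intro exI[of _ r] conjI ballI impI allI)
    show "r > 0" "ball p r \<subseteq> S \<inter> f -` S"
      using \<open>0 < r\<close> r \<open>ball p \<delta> \<subseteq> S\<close> \<open>f ` ball p r \<subseteq> ball p \<delta>\<close> by blast+
    fix z assume "z \<in> ball p r" and fz: "f z \<noteq> z"
    then have z: "z \<in> ball p \<delta>" "f z \<in> ball p \<delta>"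
      using r \<open>f ` ball p r \<subseteq> ball p \<delta>\<close> by blast+
    have u_bound: "cmod (u_ft f t z) < \<epsilon> * t" if t: "t \<in> {0<..1}" for t
    proof -
      have "cmod (u_ft f t z) \<le> 2 * (\<epsilon>/8 + \<epsilon>/8) * t"
        using t by (intro norm_u_ft_le_near_identity[OF near_identity factor_near z fz]) auto
      also have "\<dots> < \<epsilon> * t"
        using t assms(6) mult_pos_pos[of \<epsilon> t] by simp
      finally show ?thesis .
    qed
    then show "cmod (u_ft f t z) < \<epsilon> * t" if "t \<in> {0<..1}" for t
      using that .
    show "\<exists>Z. is_lift (buff_form f) (seg_pt f z) Z"
      by (rule is_lift_seg_pt_near_identity(1)[OF near_identity z fz])
    show "cmod (Z t - (Z 0 + of_real t)) < \<epsilon> * t"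
      if "is_lift (buff_form f) (seg_pt f z) Z" and "t \<in> {0<..1}" for Z t
      using is_lift_seg_pt_near_identity(2)[OF near_identity z fz that(1)] u_bound[OF that(2)]
        that(2)
      by simp
  qed
qed

theorem lemma3p5:
  fixes U :: "complex set" and f :: "complex \<Rightarrow> complex" and p :: complex and q :: nat
  assumes "open U" and "connected U" and "convex U" and "bounded U" and "U \<noteq> {}"
    and "smooth_jordan_boundary U"
    and "\<exists>W. open W \<and> closure U \<subseteq> W \<and> f holomorphic_on W"
    and "\<forall>z\<in>U. Re (deriv f z) > 0"
    and "\<forall>z\<in>frontier U. f z \<noteq> z"
    and "p \<in> U" and "f p = p" and "deriv f p = 1"
    and "q \<ge> 1" and "zorder (\<lambda>z. f z - z) p = int q + 1"
  shows "\<forall>\<epsilon>. 0 < \<epsilon> \<and> \<epsilon> < 1 \<longrightarrow>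
           (\<exists>r>0. ball p r \<subseteq> U \<inter> f -` U \<and>
             (\<forall>z\<in>ball p r. f z \<noteq> z \<longrightarrow>
                (\<forall>t\<in>{0<..1}. cmod (u_ft f t z) < \<epsilon> * t) \<and>
                (\<exists>Z. is_lift (buff_form f) (seg_pt f z) Z) \<and>
                (\<forall>Z. is_lift (buff_form f) (seg_pt f z) Z \<longrightarrow>
                   (\<forall>t\<in>{0<..1}. cmod (Z t - (Z 0 + of_real t)) < \<epsilon> * t))))"
proof -
  have "f holomorphic_on U"
    using assms(7) closure_subset holomorphic_on_subset by blast
  then show ?thesis
    by (intro allI impI lift_estimate_near_parabolic_fixed_point[OF assms(1) _ assms(10-12)]) auto
qed

end
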